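(* Let $f,g\in C[0,1]$. Let $R(f,g)=P(f,g)/Q(f,g)$, where $P(f,g)(x)=p(f(x),g(x))$ and $Q(f,g)(x)=q(f(x),g(x))$ for real polynomials $p,q$ in two variables, and where $Q(f,g)(x)\neq0$ for all $x\in[0,1]$. Then $$\overline{\dim}_B G(R(f,g))\le \max\{\overline{\dim}_B G(f),\ \overline{\dim}_B G(g)\}.$$
   Context: $C[0,1]$ is the space of real-valued continuous functions on $[0,1]$; $G(h)=\{(x,h(x)):x\in[0,1]\}\subset\mathbb{R}^2$ is the graph of $h$. For a nonempty bounded set $F$, $N_\delta(F)$ is the smallest number of sets of diameter at most $\delta$ covering $F$, and $\overline{\dim}_B F=\limsup_{\delta\to0}\frac{\log N_\delta(F)}{-\log\delta}$. *)

theory Defs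
  imports "HOL-Analysis.Analysis"
begin

definition graph01 :: "(real \<Rightarrow> real) \<Rightarrow> (real \<times> real) set" where
  "graph01 h = (\<lambda>x. (x, h x)) ` {0..1}"

definition cover_num :: "real \<Rightarrow> 'a::metric_space set \<Rightarrow> nat" where
  "cover_num \<delta> F = (LEAST n. \<exists>C. finite C \<and> card C = n \<and> F \<subseteq> \<Union>C \<and>
      (\<forall>S\<in>C. bounded S \<and> diameter S \<le> \<delta>))"

definition upper_box_dim :: "'a::metric_space set \<Rightarrow> ereal" where
  "upper_box_dim F = Limsup (at_right 0)
     (\<lambda>\<delta>. ereal (ln (real (cover_num \<delta> F)) / - ln \<delta>))"

definition poly2 :: "nat \<Rightarrow> (nat \<Rightarrow> nat \<Rightarrow> real) \<Rightarrow> real \<Rightarrow> real \<Rightarrow> real" where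
  "poly2 n a u v = (\<Sum>i\<le>n. \<Sum>j\<le>n. a i j * u ^ i * v ^ j)"

end

theory Submission
  imports Defs
begin

text \<open>
  Count the squares of the w-grid that a graph meets; up to a factor 25 this count is the
  covering number of the graph at scale 2w. In one column of the grid a continuous function
  takes every value between any two of its values there, so its oscillation on the column is
  at most w times the number of squares it meets in that column. Since f and g are bounded and
  q(f,g) is bounded away from 0, R = p(f,g)/q(f,g) satisfies
  \<bar>R x - R y\<bar> \<le> L (\<bar>f x - f y\<bar> + \<bar>g x - g y\<bar>), so column by column R meets at most
  (2L+3) times as many squares as f and g together. Hence the covering numbers of G(R) are
  bounded by a constant K times the larger of those of G(f) and G(g), and the resulting extra
  term log K / (-log \<delta>) vanishes as \<delta> tends to 0.
\<close>

lemma cover_num_le_card: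
  assumes "finite C" "F \<subseteq> \<Union>C" "\<forall>S\<in>C. bounded S \<and> diameter S \<le> \<delta>"
  shows "cover_num \<delta> F \<le> card C"
  unfolding cover_num_def by (rule Least_le) (use assms in blast)

lemma cover_num_attained:
  assumes "finite C" "F \<subseteq> \<Union>C" "\<forall>S\<in>C. bounded S \<and> diameter S \<le> \<delta>"
  obtains C' where "finite C'" "card C' = cover_num \<delta> F" "F \<subseteq> \<Union>C'"
    "\<forall>S\<in>C'. bounded S \<and> diameter S \<le> \<delta>"
proof -
  have "\<exists>C'. finite C' \<and> card C' = cover_num \<delta> F \<and> F \<subseteq> \<Union>C' \<and>
      (\<forall>S\<in>C'. bounded S \<and> diameter S \<le> \<delta>)"
    unfolding cover_num_def by (rule LeastI_ex) (use assms in blast)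
  then show ?thesis using that by blast
qed

lemma floor_divide_eq_imp_abs_diff_less:
  fixes a b w :: real
  assumes "w > 0" "\<lfloor>a / w\<rfloor> = \<lfloor>b / w\<rfloor>"
  shows "\<bar>a - b\<bar> < w"
proof -
  have "\<bar>a / w - b / w\<bar> < 1"
    using assms(2) floor_correct[of "a / w"] floor_correct[of "b / w"] by linarith
  then show ?thesis
    using assms(1) by (simp add: diff_divide_distrib[symmetric] abs_divide)
qed

lemma floor_divide_le_add_ceiling:
  fixes a b w T :: real
  assumes "w > 0" "\<bar>a - b\<bar> \<le> w * T"
  shows "\<lfloor>a / w\<rfloor> \<le> \<lfloor>b / w\<rfloor> + \<lceil>T\<rceil>"
proof -
  have "a / w \<le> b / w + T"
    using assms by (simp add: field_simps)
  then have "a / w < real_of_int (\<lfloor>b / w\<rfloor> + \<lceil>T\<rceil>) + 1"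
    using floor_correct[of "b / w"] le_of_int_ceiling[of T] unfolding of_int_add by linarith
  then show ?thesis
    by (simp only: floor_le_iff)
qed

definition grid_cell :: "real \<Rightarrow> real \<times> real \<Rightarrow> int \<times> int" where
  "grid_cell w p = (\<lfloor>fst p / w\<rfloor>, \<lfloor>snd p / w\<rfloor>)"

lemma finite_grid_cells:
  assumes "w > 0" "bounded F"
  shows "finite (grid_cell w ` F)"
proof -
  obtain B where B: "\<forall>p\<in>F. norm p \<le> B"
    using assms(2) bounded_pos by blast
  have "\<lfloor>-B / w\<rfloor> \<le> \<lfloor>t / w\<rfloor> \<and> \<lfloor>t / w\<rfloor> \<le> \<lfloor>B / w\<rfloor>" if "\<bar>t\<bar> \<le> B" for t
    using that assms(1) by (intro conjI floor_mono divide_right_mono) auto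
  moreover have "\<bar>fst p\<bar> \<le> B" "\<bar>snd p\<bar> \<le> B" if "p \<in> F" for p
    using B that norm_fst_le[of "fst p" "snd p"] norm_snd_le[of "snd p" "fst p"] by auto
  ultimately have "grid_cell w ` F \<subseteq> {\<lfloor>-B / w\<rfloor>..\<lfloor>B / w\<rfloor>} \<times> {\<lfloor>-B / w\<rfloor>..\<lfloor>B / w\<rfloor>}"
    unfolding grid_cell_def by fastforce
  then show ?thesis
    by (rule finite_subset) simp
qed

lemma grid_cover:
  assumes "w > 0" "bounded F"
  obtains C where "finite C" "card C \<le> card (grid_cell w ` F)" "F \<subseteq> \<Union>C"
    "\<forall>S\<in>C. bounded S \<and> diameter S \<le> 2 * w"
proof -
  define C where "C = (\<lambda>c. {p\<in>F. grid_cell w p = c}) ` grid_cell w ` F"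
  have "finite C" "card C \<le> card (grid_cell w ` F)"
    unfolding C_def using finite_grid_cells[OF assms] by (simp_all add: card_image_le)
  moreover have "F \<subseteq> \<Union>C"
    unfolding C_def by blast
  moreover have "bounded S \<and> diameter S \<le> 2 * w" if "S \<in> C" for S
  proof -
    obtain c where S: "S = {p\<in>F. grid_cell w p = c}"
      using \<open>S \<in> C\<close> unfolding C_def by blast
    have "norm (p - q) \<le> 2 * w" if "p \<in> S" "q \<in> S" for p q
    proof -
      have "\<bar>fst p - fst q\<bar> < w" "\<bar>snd p - snd q\<bar> < w"
        using that S floor_divide_eq_imp_abs_diff_less[OF assms(1)]
        by (auto simp: grid_cell_def)
      moreover have "norm (p - q) \<le> \<bar>fst p - fst q\<bar> + \<bar>snd p - snd q\<bar>"
        using sqrt_sum_squares_le_sum_abs by (cases p, cases q) (simp add: norm_Pair)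
      ultimately show ?thesis
        by linarith
    qed
    then have "diameter S \<le> 2 * w"
      using assms(1) by (intro diameter_le) auto
    moreover have "bounded S"
      using S by (simp add: bounded_subset[OF assms(2)])
    ultimately show ?thesis
      by simp
  qed
  ultimately show ?thesis
    using that by blast
qed

lemma cover_num_le_card_grid_cells:
  assumes "w > 0" "bounded F"
  shows "cover_num (2 * w) F \<le> card (grid_cell w ` F)"
proof -
  obtain C where "finite C" "card C \<le> card (grid_cell w ` F)" "F \<subseteq> \<Union>C"
    "\<forall>S\<in>C. bounded S \<and> diameter S \<le> 2 * w"
    by (rule grid_cover[OF assms])
  then show ?thesis
    using cover_num_le_card[of C F "2 * w"] by linarith
qed

lemma cover_num_pos:
  fixes F :: "(real \<times> real) set"
  assumes "\<delta> > 0" "bounded F" "F \<noteq> {}"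
  shows "cover_num \<delta> F \<ge> 1"
proof -
  have "\<delta> / 2 > 0"
    using assms(1) by simp
  then obtain C where C: "finite C" "F \<subseteq> \<Union>C" "\<forall>S\<in>C. bounded S \<and> diameter S \<le> 2 * (\<delta> / 2)"
    using assms(2) by (rule grid_cover) blast
  then have "\<forall>S\<in>C. bounded S \<and> diameter S \<le> \<delta>"
    by simp
  with C(1,2) obtain C' where C': "finite C'" "card C' = cover_num \<delta> F" "F \<subseteq> \<Union>C'"
    by (rule cover_num_attained)
  then have "C' \<noteq> {}"
    using assms(3) by auto
  then show ?thesis
    using C' by (simp add: Suc_le_eq card_gt_0_iff flip: C'(2))
qed

text \<open>A set of diameter at most 2w meets at most 5 columns and 5 rows of the grid.\<close>

lemma card_grid_cells_le_cover_num:
  assumes "w > 0" "bounded F"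
  shows "card (grid_cell w ` F) \<le> 25 * cover_num (2 * w) F"
proof -
  obtain C0 where "finite C0" "F \<subseteq> \<Union>C0" "\<forall>S\<in>C0. bounded S \<and> diameter S \<le> 2 * w"
    by (rule grid_cover[OF assms]) blast
  then obtain C where C: "finite C" "card C = cover_num (2 * w) F" "F \<subseteq> \<Union>C"
    "\<forall>S\<in>C. bounded S \<and> diameter S \<le> 2 * w"
    by (rule cover_num_attained)
  have piece: "card (grid_cell w ` (S \<inter> F)) \<le> 25" if "S \<in> C" for S
  proof (cases "S = {}")
    case False
    then obtain p0 where p0: "p0 \<in> S" by blast
    define i0 where "i0 = \<lfloor>fst p0 / w\<rfloor>"
    define j0 where "j0 = \<lfloor>snd p0 / w\<rfloor>"
    have "grid_cell w p \<in> {i0-2..i0+2} \<times> {j0-2..j0+2}" if "p \<in> S" for p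
    proof -
      have "dist p p0 \<le> diameter S"
        using C(4) \<open>S \<in> C\<close> that p0 by (simp add: diameter_bounded_bound)
      then have "dist p p0 \<le> 2 * w"
        using C(4) \<open>S \<in> C\<close> by fastforce
      then have "\<bar>fst p - fst p0\<bar> \<le> w * 2" "\<bar>snd p - snd p0\<bar> \<le> w * 2"
        using dist_fst_le[of p p0] dist_snd_le[of p p0] by (auto simp: dist_real_def)
      then have "\<lfloor>fst p / w\<rfloor> \<le> i0 + 2" "i0 \<le> \<lfloor>fst p / w\<rfloor> + 2"
          "\<lfloor>snd p / w\<rfloor> \<le> j0 + 2" "j0 \<le> \<lfloor>snd p / w\<rfloor> + 2"
        unfolding i0_def j0_def
        using floor_divide_le_add_ceiling[OF assms(1), of _ _ 2] by (simp_all add: abs_minus_commute)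
      then show ?thesis
        unfolding grid_cell_def by simp
    qed
    then have "grid_cell w ` (S \<inter> F) \<subseteq> {i0-2..i0+2} \<times> {j0-2..j0+2}"
      by blast
    then have "card (grid_cell w ` (S \<inter> F)) \<le> card ({i0-2..i0+2} \<times> {j0-2..j0+2})"
      by (intro card_mono) simp_all
    then show ?thesis
      by (simp add: card_cartesian_product)
  qed simp
  have "grid_cell w ` F = (\<Union>S\<in>C. grid_cell w ` (S \<inter> F))"
    using C(3) by blast
  then have "card (grid_cell w ` F) \<le> (\<Sum>S\<in>C. card (grid_cell w ` (S \<inter> F)))"
    by (simp add: card_UN_le[OF C(1)])
  also have "\<dots> \<le> (\<Sum>S\<in>C. 25)"
    using piece by (rule sum_mono)
  finally show ?thesis
    using C(2) by (simp add: mult.commute)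
qed

lemma bounded_graph01:
  assumes "continuous_on {0..1} u"
  shows "bounded (graph01 u)"
  unfolding graph01_def
  by (intro compact_imp_bounded compact_continuous_image continuous_intros assms) auto

lemma grid_cells_graph01:
  "grid_cell w ` graph01 u = (\<lambda>x. (\<lfloor>x / w\<rfloor>, \<lfloor>u x / w\<rfloor>)) ` {0..1}"
  by (simp add: graph01_def grid_cell_def image_image)

definition column_rows :: "real \<Rightarrow> (real \<Rightarrow> real) \<Rightarrow> int \<Rightarrow> int set" where
  "column_rows w u i = (\<lambda>x. \<lfloor>u x / w\<rfloor>) ` {x\<in>{0..1}. \<lfloor>x / w\<rfloor> = i}"

lemma grid_cells_graph01_Sigma:
  "grid_cell w ` graph01 u = Sigma ((\<lambda>x. \<lfloor>x / w\<rfloor>) ` {0..1}) (column_rows w u)"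
  unfolding grid_cells_graph01
proof (intro set_eqI iffI)
  fix c assume "c \<in> Sigma ((\<lambda>x. \<lfloor>x / w\<rfloor>) ` {0..1}) (column_rows w u)"
  then obtain y where "y \<in> {0..1}" "c = (\<lfloor>y / w\<rfloor>, \<lfloor>u y / w\<rfloor>)"
    unfolding column_rows_def by auto
  then show "c \<in> (\<lambda>x. (\<lfloor>x / w\<rfloor>, \<lfloor>u x / w\<rfloor>)) ` {0..1}"
    by blast
qed (auto simp: column_rows_def)

lemma finite_column_rows:
  assumes "w > 0" "continuous_on {0..1} u"
  shows "finite (column_rows w u i)"
proof -
  have "column_rows w u i \<subseteq> snd ` grid_cell w ` graph01 u"
    unfolding grid_cells_graph01 column_rows_def image_image by auto
  then show ?thesis
    by (rule finite_subset) (intro finite_imageI finite_grid_cells assms(1) bounded_graph01 assms(2))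
qed

lemma card_grid_cells_graph01:
  assumes "w > 0" "continuous_on {0..1} u"
  shows "card (grid_cell w ` graph01 u)
    = (\<Sum>i\<in>(\<lambda>x. \<lfloor>x / w\<rfloor>) ` {0..1}. card (column_rows w u i))"
proof -
  have "(\<lambda>x. \<lfloor>x / w\<rfloor>) ` {0..1} = fst ` grid_cell w ` graph01 u"
    unfolding grid_cells_graph01 image_image by simp
  then have "finite ((\<lambda>x. \<lfloor>x / w\<rfloor>) ` {0..1::real})"
    using finite_grid_cells[OF assms(1) bounded_graph01[OF assms(2)]] by simp
  then show ?thesis
    unfolding grid_cells_graph01_Sigma using finite_column_rows[OF assms] by simp
qed

lemma is_interval_column:
  assumes "w > 0"
  shows "is_interval {x\<in>{0..1::real}. \<lfloor>x / w\<rfloor> = i}"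
  unfolding is_interval_1
proof (intro ballI allI impI)
  fix a b t assume a: "a \<in> {x\<in>{0..1}. \<lfloor>x / w\<rfloor> = i}" and b: "b \<in> {x\<in>{0..1}. \<lfloor>x / w\<rfloor> = i}"
    and t: "a \<le> t \<and> t \<le> b"
  have "\<lfloor>a / w\<rfloor> \<le> \<lfloor>t / w\<rfloor>" "\<lfloor>t / w\<rfloor> \<le> \<lfloor>b / w\<rfloor>"
    using t assms by (simp_all add: floor_mono divide_right_mono)
  then show "t \<in> {x\<in>{0..1}. \<lfloor>x / w\<rfloor> = i}"
    using a b t by simp
qed

text \<open>By the intermediate value theorem, a continuous function meets every row between two of
  its values inside a column.\<close>

lemma atLeastAtMost_floor_subset_column_rows:
  assumes w: "w > 0" and u: "continuous_on {0..1} u"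
    and a: "a \<in> {0..1}" "\<lfloor>a / w\<rfloor> = i" and b: "b \<in> {0..1}" "\<lfloor>b / w\<rfloor> = i"
    and le: "u a \<le> u b"
  shows "{\<lfloor>u a / w\<rfloor>..\<lfloor>u b / w\<rfloor>} \<subseteq> column_rows w u i"
proof
  define column where "column = {x\<in>{0..1}. \<lfloor>x / w\<rfloor> = i}"
  have "continuous_on column u"
    using u by (rule continuous_on_subset) (auto simp: column_def)
  then have "connected (u ` column)"
    using is_interval_column[OF w] unfolding column_def
    by (intro connected_continuous_image is_interval_connected)
  moreover have "a \<in> column" "b \<in> column"
    using a b unfolding column_def by simp_all
  ultimately have range: "{u a..u b} \<subseteq> u ` column"
    by (intro connected_contains_Icc) auto
  fix r assume r: "r \<in> {\<lfloor>u a / w\<rfloor>..\<lfloor>u b / w\<rfloor>}"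
  \<comment> \<open>the value max (u a) (r w) lies in row r and between u a and u b\<close>
  define t where "t = max (u a) (r * w)"
  have "real_of_int r \<le> u b / w"
    using r floor_correct[of "u b / w"] by simp linarith
  then have "r * w \<le> u b"
    using w by (simp add: le_divide_eq)
  then have "t \<in> u ` column"
    using range le unfolding t_def by auto
  moreover have "\<lfloor>t / w\<rfloor> = r"
  proof (cases "u a \<le> r * w")
    case False
    then have "t = u a" "real_of_int r < u a / w"
      using w unfolding t_def by (simp_all add: pos_less_divide_eq)
    moreover have "u a / w < real_of_int r + 1"
      using r floor_correct[of "u a / w"] by simp linarith
    ultimately show ?thesis
      by (simp add: floor_eq_iff)
  qed (use w t_def in simp)
  ultimately show "r \<in> column_rows w u i"
    unfolding column_rows_def column_def by auto
qed

lemma abs_diff_le_card_column_rows: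
  assumes w: "w > 0" and u: "continuous_on {0..1} u"
    and x: "x \<in> {0..1}" "\<lfloor>x / w\<rfloor> = i" and y: "y \<in> {0..1}" "\<lfloor>y / w\<rfloor> = i"
  shows "\<bar>u x - u y\<bar> \<le> w * card (column_rows w u i)"
proof -
  have less: "u b - u a < w * card (column_rows w u i)"
    if ab: "a \<in> {x, y}" "b \<in> {x, y}" "u a \<le> u b" for a b
  proof -
    have "card {\<lfloor>u a / w\<rfloor>..\<lfloor>u b / w\<rfloor>} \<le> card (column_rows w u i)"
      using ab x y
      by (intro card_mono finite_column_rows[OF w u] atLeastAtMost_floor_subset_column_rows[OF w u]) auto
    moreover have "\<lfloor>u a / w\<rfloor> \<le> \<lfloor>u b / w\<rfloor>"
      using ab(3) w by (simp add: floor_mono divide_right_mono)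
    ultimately have "real_of_int (\<lfloor>u b / w\<rfloor> - \<lfloor>u a / w\<rfloor> + 1) \<le> card (column_rows w u i)"
      by simp
    moreover have "u b / w - u a / w < real_of_int (\<lfloor>u b / w\<rfloor> - \<lfloor>u a / w\<rfloor> + 1)"
      using floor_correct[of "u a / w"] floor_correct[of "u b / w"] by simp linarith
    ultimately have "(u b - u a) / w < card (column_rows w u i)"
      by (simp add: diff_divide_distrib)
    then show ?thesis
      using w by (simp add: divide_less_eq mult.commute)
  qed
  show ?thesis
    using less[of x y] less[of y x] by (cases "u x \<le> u y") simp_all
qed

lemma card_floor_divide_image_le:
  fixes v :: "'a \<Rightarrow> real" and w c T :: real
  assumes w: "w > 0" and T: "T \<ge> 0" and close: "\<And>y. y \<in> S \<Longrightarrow> \<bar>v y - c\<bar> \<le> w * T"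
  shows "card ((\<lambda>x. \<lfloor>v x / w\<rfloor>) ` S) \<le> 2 * T + 3"
proof -
  have "(\<lambda>x. \<lfloor>v x / w\<rfloor>) ` S \<subseteq> {\<lfloor>c / w\<rfloor> - \<lceil>T\<rceil>..\<lfloor>c / w\<rfloor> + \<lceil>T\<rceil>}"
  proof
    fix r assume "r \<in> (\<lambda>x. \<lfloor>v x / w\<rfloor>) ` S"
    then obtain y where y: "y \<in> S" "r = \<lfloor>v y / w\<rfloor>"
      by blast
    then show "r \<in> {\<lfloor>c / w\<rfloor> - \<lceil>T\<rceil>..\<lfloor>c / w\<rfloor> + \<lceil>T\<rceil>}"
      using floor_divide_le_add_ceiling[OF w, of "v y" c T] floor_divide_le_add_ceiling[OF w, of c "v y" T]
        close[OF y(1)] by (simp add: abs_minus_commute)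
  qed
  then have "card ((\<lambda>x. \<lfloor>v x / w\<rfloor>) ` S) \<le> card {\<lfloor>c / w\<rfloor> - \<lceil>T\<rceil>..\<lfloor>c / w\<rfloor> + \<lceil>T\<rceil>}"
    by (intro card_mono) simp_all
  moreover have "real (card {\<lfloor>c / w\<rfloor> - \<lceil>T\<rceil>..\<lfloor>c / w\<rfloor> + \<lceil>T\<rceil>}) = 2 * \<lceil>T\<rceil> + 1"
    using T by simp
  ultimately show ?thesis
    using ceiling_correct[of T] by linarith
qed

lemma card_column_rows_le:
  fixes f g h :: "real \<Rightarrow> real" and L :: real
  assumes w: "w > 0" and f: "continuous_on {0..1} f" and g: "continuous_on {0..1} g"
    and L: "L \<ge> 0"
    and lip: "\<forall>x\<in>{0..1}. \<forall>y\<in>{0..1}. \<bar>h x - h y\<bar> \<le> L * (\<bar>f x - f y\<bar> + \<bar>g x - g y\<bar>)"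
    and i: "i \<in> (\<lambda>x. \<lfloor>x / w\<rfloor>) ` {0..1}"
  shows "card (column_rows w h i)
    \<le> (2 * L + 3) * (card (column_rows w f i) + card (column_rows w g i))"
proof -
  obtain x0 where x0: "x0 \<in> {0..1}" "\<lfloor>x0 / w\<rfloor> = i"
    using i by auto
  define T where "T = L * (card (column_rows w f i) + card (column_rows w g i))"
  have "\<bar>h y - h x0\<bar> \<le> w * T" if y: "y \<in> {0..1}" "\<lfloor>y / w\<rfloor> = i" for y
  proof -
    have "\<bar>h y - h x0\<bar> \<le> L * (\<bar>f y - f x0\<bar> + \<bar>g y - g x0\<bar>)"
      using lip y(1) x0(1) by blast
    also have "\<dots> \<le> L * (w * card (column_rows w f i) + w * card (column_rows w g i))"
      using abs_diff_le_card_column_rows[OF w f y x0] abs_diff_le_card_column_rows[OF w g y x0] L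
      by (intro mult_left_mono add_mono) simp_all
    also have "\<dots> = w * T"
      unfolding T_def by (simp add: algebra_simps)
    finally show ?thesis .
  qed
  moreover have "T \<ge> 0"
    unfolding T_def using L by simp
  ultimately have "card (column_rows w h i) \<le> 2 * T + 3"
    unfolding column_rows_def by (intro card_floor_divide_image_le[OF w, of T _ _ "h x0"]) auto
  moreover have "column_rows w f i \<noteq> {}"
    using x0 unfolding column_rows_def by blast
  then have "card (column_rows w f i) \<ge> 1"
    using finite_column_rows[OF w f] by (simp add: Suc_le_eq card_gt_0_iff)
  ultimately show ?thesis
    unfolding T_def by (simp add: algebra_simps)
qed

lemma card_grid_cells_graph01_le:
  fixes f g h :: "real \<Rightarrow> real" and L :: real
  assumes w: "w > 0" and f: "continuous_on {0..1} f" and g: "continuous_on {0..1} g"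
    and h: "continuous_on {0..1} h" and L: "L \<ge> 0"
    and lip: "\<forall>x\<in>{0..1}. \<forall>y\<in>{0..1}. \<bar>h x - h y\<bar> \<le> L * (\<bar>f x - f y\<bar> + \<bar>g x - g y\<bar>)"
  shows "card (grid_cell w ` graph01 h)
    \<le> (2 * L + 3) * (card (grid_cell w ` graph01 f) + card (grid_cell w ` graph01 g))"
proof -
  let ?I = "(\<lambda>x. \<lfloor>x / w\<rfloor>) ` {0..1::real}"
  have "real (card (grid_cell w ` graph01 h)) = (\<Sum>i\<in>?I. real (card (column_rows w h i)))"
    unfolding card_grid_cells_graph01[OF w h] by simp
  also have "\<dots> \<le> (\<Sum>i\<in>?I. (2 * L + 3) * (card (column_rows w f i) + card (column_rows w g i)))"
    by (intro sum_mono card_column_rows_le[OF w f g L lip])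
  also have "\<dots> = (2 * L + 3) * (card (grid_cell w ` graph01 f) + card (grid_cell w ` graph01 g))"
    unfolding card_grid_cells_graph01[OF w f] card_grid_cells_graph01[OF w g]
    by (simp add: sum_distrib_left sum.distrib distrib_left)
  finally show ?thesis .
qed

lemma cover_num_graph01_le:
  fixes f g h :: "real \<Rightarrow> real" and L :: real
  assumes \<delta>: "\<delta> > 0" and f: "continuous_on {0..1} f" and g: "continuous_on {0..1} g"
    and h: "continuous_on {0..1} h" and L: "L \<ge> 0"
    and lip: "\<forall>x\<in>{0..1}. \<forall>y\<in>{0..1}. \<bar>h x - h y\<bar> \<le> L * (\<bar>f x - f y\<bar> + \<bar>g x - g y\<bar>)"
  shows "real (cover_num \<delta> (graph01 h))
    \<le> 50 * (2 * L + 3) * max (real (cover_num \<delta> (graph01 f))) (real (cover_num \<delta> (graph01 g)))"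
proof -
  define w where "w = \<delta> / 2"
  have w: "w > 0" and \<delta>_eq: "\<delta> = 2 * w"
    using \<delta> unfolding w_def by simp_all
  have "real (cover_num \<delta> (graph01 h)) \<le> card (grid_cell w ` graph01 h)"
    unfolding \<delta>_eq using cover_num_le_card_grid_cells[OF w bounded_graph01[OF h]] by simp
  also have "\<dots> \<le> (2 * L + 3) * (card (grid_cell w ` graph01 f) + card (grid_cell w ` graph01 g))"
    by (rule card_grid_cells_graph01_le[OF w f g h L lip])
  also have "\<dots> \<le> (2 * L + 3) * (25 * cover_num \<delta> (graph01 f) + 25 * cover_num \<delta> (graph01 g))"
  proof -
    have "card (grid_cell w ` graph01 f) + card (grid_cell w ` graph01 g)
        \<le> 25 * cover_num \<delta> (graph01 f) + 25 * cover_num \<delta> (graph01 g)"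
      unfolding \<delta>_eq
      using card_grid_cells_le_cover_num[OF w bounded_graph01[OF f]]
        card_grid_cells_le_cover_num[OF w bounded_graph01[OF g]] by (rule add_mono)
    then show ?thesis
      using L by (intro mult_left_mono) (simp_all flip: of_nat_add of_nat_mult)
  qed
  also have "\<dots> \<le> (2 * L + 3) * (50 * max (real (cover_num \<delta> (graph01 f))) (real (cover_num \<delta> (graph01 g))))"
    using L by (intro mult_left_mono) (simp_all add: max_def)
  also have "\<dots> = 50 * (2 * L + 3) * max (real (cover_num \<delta> (graph01 f))) (real (cover_num \<delta> (graph01 g)))"
    by simp
  finally show ?thesis .
qed

lemma Limsup_le_max_Limsup:
  fixes e r s t :: "'a \<Rightarrow> real"
  assumes le: "eventually (\<lambda>x. t x \<le> e x + max (r x) (s x)) F" and e: "(e \<longlongrightarrow> 0) F"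
  shows "Limsup F (\<lambda>x. ereal (t x))
    \<le> max (Limsup F (\<lambda>x. ereal (r x))) (Limsup F (\<lambda>x. ereal (s x)))"
    (is "_ \<le> ?M")
  unfolding Limsup_le_iff
proof (intro allI impI)
  fix y assume "y > ?M"
  then obtain z where z: "?M < z" "z < y"
    using dense by blast
  then obtain z' where z': "z = ereal z'"
    by (cases z) auto
  have r: "eventually (\<lambda>x. ereal (r x) < z) F" and s: "eventually (\<lambda>x. ereal (s x) < z) F"
    using z(1) by (simp_all add: Limsup_lessD)
  show "eventually (\<lambda>x. ereal (t x) < y) F"
  proof (cases y)
    case (real y')
    have "eventually (\<lambda>x. e x < y' - z') F"
      using order_tendstoD(2)[OF e, of "y' - z'"] z(2) z' real by simp
    with le r s show ?thesis
    proof eventually_elim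
      case (elim x)
      then have "r x < z'" "s x < z'"
        using z' by simp_all
      with elim show ?case
        using real by simp
    qed
  qed (use z in auto)
qed

lemma ln_div_le_add_max:
  fixes \<delta> K N N1 N2 :: real
  assumes "0 < \<delta>" "\<delta> < 1" "1 \<le> N" "1 \<le> N1" "1 \<le> N2" "1 \<le> K" "N \<le> K * max N1 N2"
  shows "ln N / - ln \<delta> \<le> ln K / - ln \<delta> + max (ln N1 / - ln \<delta>) (ln N2 / - ln \<delta>)"
proof -
  have "ln N \<le> ln (K * max N1 N2)"
    using assms(3-7) by simp
  also have "\<dots> = ln K + max (ln N1) (ln N2)"
    using assms(4-6) by (simp add: ln_mult max_def)
  finally have "ln N \<le> ln K + max (ln N1) (ln N2)" .
  moreover have pos: "- ln \<delta> \<ge> 0"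
    using assms(1,2) by simp
  ultimately have "ln N / - ln \<delta> \<le> (ln K + max (ln N1) (ln N2)) / - ln \<delta>"
    by (rule divide_right_mono)
  also have "\<dots> = ln K / - ln \<delta> + max (ln N1) (ln N2) / - ln \<delta>"
    by (rule add_divide_distrib)
  finally show ?thesis
    by (simp only: max_divide_distrib_right pos if_True)
qed

lemma tendsto_div_minus_ln_at_right_0: "((\<lambda>\<delta>. c / - ln \<delta>) \<longlongrightarrow> 0) (at_right (0::real))"
proof -
  have "filterlim (\<lambda>\<delta>. - ln \<delta>) at_top (at_right (0::real))"
    using ln_at_0 by (simp add: filterlim_uminus_at_top)
  then show ?thesis
    by (intro tendsto_divide_0[OF tendsto_const] filterlim_at_top_imp_at_infinity)
qed

lemma upper_box_dim_graph01_le_max: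
  fixes f g h :: "real \<Rightarrow> real" and L :: real
  assumes f: "continuous_on {0..1} f" and g: "continuous_on {0..1} g"
    and h: "continuous_on {0..1} h" and L: "L \<ge> 0"
    and lip: "\<forall>x\<in>{0..1}. \<forall>y\<in>{0..1}. \<bar>h x - h y\<bar> \<le> L * (\<bar>f x - f y\<bar> + \<bar>g x - g y\<bar>)"
  shows "upper_box_dim (graph01 h) \<le> max (upper_box_dim (graph01 f)) (upper_box_dim (graph01 g))"
proof -
  define K where "K = 50 * (2 * L + 3)"
  define N where "N u \<delta> = real (cover_num \<delta> (graph01 u))" for u \<delta>
  have N_ge_1: "N u \<delta> \<ge> 1" if "continuous_on {0..1} u" "\<delta> > 0" for u \<delta>
    unfolding N_def using cover_num_pos[OF that(2) bounded_graph01[OF that(1)]]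
    by (simp add: graph01_def)
  have "eventually (\<lambda>\<delta>. ln (N h \<delta>) / - ln \<delta>
      \<le> ln K / - ln \<delta> + max (ln (N f \<delta>) / - ln \<delta>) (ln (N g \<delta>) / - ln \<delta>)) (at_right 0)"
  proof (rule eventually_at_rightI[of 0 1])
    fix \<delta> :: real assume "\<delta> \<in> {0<..<1}"
    then show "ln (N h \<delta>) / - ln \<delta>
        \<le> ln K / - ln \<delta> + max (ln (N f \<delta>) / - ln \<delta>) (ln (N g \<delta>) / - ln \<delta>)"
      using N_ge_1 f g h L cover_num_graph01_le[OF _ f g h L lip, of \<delta>]
      by (intro ln_div_le_add_max) (auto simp: K_def N_def)
  qed simp
  then show ?thesis
    unfolding upper_box_dim_def N_def
    by (rule Limsup_le_max_Limsup[OF _ tendsto_div_minus_ln_at_right_0])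
qed

definition bounded_lipschitz_wrt :: "'a set \<Rightarrow> ('a \<Rightarrow> 'a \<Rightarrow> real) \<Rightarrow> ('a \<Rightarrow> real) \<Rightarrow> bool" where
  "bounded_lipschitz_wrt S \<rho> k \<longleftrightarrow>
     bounded (k ` S) \<and> (\<exists>L\<ge>0. \<forall>x\<in>S. \<forall>y\<in>S. \<bar>k x - k y\<bar> \<le> L * \<rho> x y)"

lemma bounded_lipschitz_wrtI:
  assumes "\<And>x. x \<in> S \<Longrightarrow> \<bar>k x\<bar> \<le> B" "L \<ge> 0"
    "\<And>x y. x \<in> S \<Longrightarrow> y \<in> S \<Longrightarrow> \<bar>k x - k y\<bar> \<le> L * \<rho> x y"
  shows "bounded_lipschitz_wrt S \<rho> k"
  unfolding bounded_lipschitz_wrt_def bounded_real using assms by blast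

lemma bounded_lipschitz_wrtE:
  assumes "bounded_lipschitz_wrt S \<rho> k"
  obtains B L where "B > 0" "L \<ge> 0" "\<And>x. x \<in> S \<Longrightarrow> \<bar>k x\<bar> \<le> B"
    "\<And>x y. x \<in> S \<Longrightarrow> y \<in> S \<Longrightarrow> \<bar>k x - k y\<bar> \<le> L * \<rho> x y"
  using assms unfolding bounded_lipschitz_wrt_def bounded_pos by auto

lemma bounded_lipschitz_wrt_const: "bounded_lipschitz_wrt S \<rho> (\<lambda>x. c)"
  by (rule bounded_lipschitz_wrtI[of _ _ "\<bar>c\<bar>" 0]) simp_all

lemma bounded_lipschitz_wrt_add:
  assumes "bounded_lipschitz_wrt S \<rho> k1" "bounded_lipschitz_wrt S \<rho> k2"
  shows "bounded_lipschitz_wrt S \<rho> (\<lambda>x. k1 x + k2 x)"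
proof -
  obtain B1 L1 where 1: "L1 \<ge> 0" "\<And>x. x \<in> S \<Longrightarrow> \<bar>k1 x\<bar> \<le> B1"
    "\<And>x y. x \<in> S \<Longrightarrow> y \<in> S \<Longrightarrow> \<bar>k1 x - k1 y\<bar> \<le> L1 * \<rho> x y"
    using assms(1) by (rule bounded_lipschitz_wrtE) blast
  obtain B2 L2 where 2: "L2 \<ge> 0" "\<And>x. x \<in> S \<Longrightarrow> \<bar>k2 x\<bar> \<le> B2"
    "\<And>x y. x \<in> S \<Longrightarrow> y \<in> S \<Longrightarrow> \<bar>k2 x - k2 y\<bar> \<le> L2 * \<rho> x y"
    using assms(2) by (rule bounded_lipschitz_wrtE) blast
  show ?thesis
  proof (rule bounded_lipschitz_wrtI[of _ _ "B1 + B2" "L1 + L2"])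
    fix x y assume "x \<in> S" "y \<in> S"
    then show "\<bar>k1 x + k2 x - (k1 y + k2 y)\<bar> \<le> (L1 + L2) * \<rho> x y"
      using 1(3)[of x y] 2(3)[of x y] by (simp add: distrib_right abs_triangle_ineq4)
  next
    show "\<bar>k1 x + k2 x\<bar> \<le> B1 + B2" if "x \<in> S" for x
      using abs_triangle_ineq[of "k1 x" "k2 x"] 1(2)[OF that] 2(2)[OF that] by linarith
  qed (use 1 2 in simp)
qed

lemma bounded_lipschitz_wrt_mult:
  assumes "bounded_lipschitz_wrt S \<rho> k1" "bounded_lipschitz_wrt S \<rho> k2"
  shows "bounded_lipschitz_wrt S \<rho> (\<lambda>x. k1 x * k2 x)"
proof -
  obtain B1 L1 where 1: "B1 > 0" "L1 \<ge> 0" "\<And>x. x \<in> S \<Longrightarrow> \<bar>k1 x\<bar> \<le> B1"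
    "\<And>x y. x \<in> S \<Longrightarrow> y \<in> S \<Longrightarrow> \<bar>k1 x - k1 y\<bar> \<le> L1 * \<rho> x y"
    using assms(1) by (rule bounded_lipschitz_wrtE) blast
  obtain B2 L2 where 2: "B2 > 0" "L2 \<ge> 0" "\<And>x. x \<in> S \<Longrightarrow> \<bar>k2 x\<bar> \<le> B2"
    "\<And>x y. x \<in> S \<Longrightarrow> y \<in> S \<Longrightarrow> \<bar>k2 x - k2 y\<bar> \<le> L2 * \<rho> x y"
    using assms(2) by (rule bounded_lipschitz_wrtE) blast
  show ?thesis
  proof (rule bounded_lipschitz_wrtI[of _ _ "B1 * B2" "B1 * L2 + B2 * L1"])
    fix x y assume xy: "x \<in> S" "y \<in> S"
    have "k1 x * k2 x - k1 y * k2 y = k1 x * (k2 x - k2 y) + k2 y * (k1 x - k1 y)"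
      by (simp add: algebra_simps)
    then have "\<bar>k1 x * k2 x - k1 y * k2 y\<bar> \<le> \<bar>k1 x\<bar> * \<bar>k2 x - k2 y\<bar> + \<bar>k2 y\<bar> * \<bar>k1 x - k1 y\<bar>"
      by (metis abs_mult abs_triangle_ineq)
    also have "\<dots> \<le> B1 * (L2 * \<rho> x y) + B2 * (L1 * \<rho> x y)"
      using 1 2 xy by (intro add_mono mult_mono) auto
    finally show "\<bar>k1 x * k2 x - k1 y * k2 y\<bar> \<le> (B1 * L2 + B2 * L1) * \<rho> x y"
      by (simp add: algebra_simps)
  next
    show "\<bar>k1 x * k2 x\<bar> \<le> B1 * B2" if "x \<in> S" for x
      using 1 2 that by (simp add: abs_mult mult_mono)
  qed (use 1 2 in simp)
qed

lemma bounded_lipschitz_wrt_sum: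
  assumes "finite A" "\<And>i. i \<in> A \<Longrightarrow> bounded_lipschitz_wrt S \<rho> (k i)"
  shows "bounded_lipschitz_wrt S \<rho> (\<lambda>x. \<Sum>i\<in>A. k i x)"
  using assms
proof (induction A rule: finite_induct)
  case empty
  then show ?case
    using bounded_lipschitz_wrt_const[of S \<rho> 0] by simp
next
  case (insert a A)
  then show ?case
    by (simp add: bounded_lipschitz_wrt_add)
qed

lemma bounded_lipschitz_wrt_power:
  assumes "bounded_lipschitz_wrt S \<rho> k"
  shows "bounded_lipschitz_wrt S \<rho> (\<lambda>x. k x ^ n)"
proof (induction n)
  case 0
  then show ?case
    using bounded_lipschitz_wrt_const[of S \<rho> 1] by simp
next
  case (Suc n)
  then show ?case
    using bounded_lipschitz_wrt_mult[OF assms Suc] by simp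
qed

lemma bounded_lipschitz_wrt_inverse:
  assumes "bounded_lipschitz_wrt S \<rho> k" "c > 0" "\<And>x. x \<in> S \<Longrightarrow> c \<le> \<bar>k x\<bar>"
  shows "bounded_lipschitz_wrt S \<rho> (\<lambda>x. inverse (k x))"
proof -
  obtain L where L: "L \<ge> 0" "\<And>x y. x \<in> S \<Longrightarrow> y \<in> S \<Longrightarrow> \<bar>k x - k y\<bar> \<le> L * \<rho> x y"
    using assms(1) by (rule bounded_lipschitz_wrtE) blast
  show ?thesis
  proof (rule bounded_lipschitz_wrtI[of _ _ "inverse c" "L / c\<^sup>2"])
    fix x y assume xy: "x \<in> S" "y \<in> S"
    have c: "c \<le> \<bar>k x\<bar>" "c \<le> \<bar>k y\<bar>"
      using assms(3) xy by simp_all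
    then have "k x \<noteq> 0" "k y \<noteq> 0"
      using assms(2) by auto
    then have "\<bar>inverse (k x) - inverse (k y)\<bar> = \<bar>k x - k y\<bar> / (\<bar>k x\<bar> * \<bar>k y\<bar>)"
      by (simp add: inverse_diff_inverse abs_mult abs_minus_commute divide_inverse)
    also have "\<dots> \<le> \<bar>k x - k y\<bar> / c\<^sup>2"
      using c assms(2) by (intro divide_left_mono) (simp_all add: power2_eq_square mult_mono)
    also have "\<dots> \<le> L * \<rho> x y / c\<^sup>2"
      using L(2)[OF xy] by (simp add: divide_right_mono)
    finally show "\<bar>inverse (k x) - inverse (k y)\<bar> \<le> L / c\<^sup>2 * \<rho> x y"
      by simp
  qed (use L(1) assms in \<open>simp_all add: le_imp_inverse_le\<close>)
qed

lemma bounded_lipschitz_wrt_inverse_nonzero: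
  assumes "bounded_lipschitz_wrt S \<rho> k" "compact S" "continuous_on S k" "\<And>x. x \<in> S \<Longrightarrow> k x \<noteq> 0"
  shows "bounded_lipschitz_wrt S \<rho> (\<lambda>x. inverse (k x))"
proof (cases "S = {}")
  case False
  have "continuous_on S (\<lambda>x. \<bar>k x\<bar>)"
    using assms(3) by (intro continuous_intros)
  then obtain x0 where "x0 \<in> S" "\<And>x. x \<in> S \<Longrightarrow> \<bar>k x0\<bar> \<le> \<bar>k x\<bar>"
    using continuous_attains_inf[OF assms(2) False] by blast
  then show ?thesis
    using assms(4)[of x0] by (intro bounded_lipschitz_wrt_inverse[OF assms(1), of "\<bar>k x0\<bar>"]) simp_all
qed (auto simp: bounded_lipschitz_wrt_def)

lemma bounded_lipschitz_wrt_continuous: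
  assumes "compact S" "continuous_on S u" "\<And>x y. x \<in> S \<Longrightarrow> y \<in> S \<Longrightarrow> \<bar>u x - u y\<bar> \<le> \<rho> x y"
  shows "bounded_lipschitz_wrt S \<rho> u"
  unfolding bounded_lipschitz_wrt_def
  using compact_imp_bounded[OF compact_continuous_image[OF assms(2,1)]] assms(3)
  by (intro conjI exI[of _ 1]) simp_all

lemma bounded_lipschitz_wrt_poly2:
  assumes "bounded_lipschitz_wrt S \<rho> u" "bounded_lipschitz_wrt S \<rho> v"
  shows "bounded_lipschitz_wrt S \<rho> (\<lambda>x. poly2 n a (u x) (v x))"
  unfolding poly2_def
  by (intro bounded_lipschitz_wrt_sum bounded_lipschitz_wrt_mult bounded_lipschitz_wrt_const
      bounded_lipschitz_wrt_power assms finite_atMost)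

theorem proposition3p8:
  fixes f g :: "real \<Rightarrow> real" and n m :: nat and a b :: "nat \<Rightarrow> nat \<Rightarrow> real"
  assumes "continuous_on {0..1} f" and "continuous_on {0..1} g"
    and "\<forall>x\<in>{0..1}. poly2 m b (f x) (g x) \<noteq> 0"
  shows "upper_box_dim (graph01 (\<lambda>x. poly2 n a (f x) (g x) / poly2 m b (f x) (g x)))
         \<le> max (upper_box_dim (graph01 f)) (upper_box_dim (graph01 g))"
proof -
  define \<rho> where "\<rho> x y = \<bar>f x - f y\<bar> + \<bar>g x - g y\<bar>" for x y
  define R where "R x = poly2 n a (f x) (g x) / poly2 m b (f x) (g x)" for x
  have f: "bounded_lipschitz_wrt {0..1} \<rho> f" and g: "bounded_lipschitz_wrt {0..1} \<rho> g"
    using assms(1,2) by (auto intro!: bounded_lipschitz_wrt_continuous simp: \<rho>_def)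
  have "bounded_lipschitz_wrt {0..1} \<rho> (\<lambda>x. poly2 n a (f x) (g x) * inverse (poly2 m b (f x) (g x)))"
    using assms(3)
    by (intro bounded_lipschitz_wrt_mult bounded_lipschitz_wrt_inverse_nonzero bounded_lipschitz_wrt_poly2 f g)
      (auto simp: poly2_def intro!: continuous_intros assms(1,2))
  then obtain L where "L \<ge> 0" "\<forall>x\<in>{0..1}. \<forall>y\<in>{0..1}. \<bar>R x - R y\<bar> \<le> L * \<rho> x y"
    unfolding bounded_lipschitz_wrt_def R_def divide_inverse by blast
  moreover have "continuous_on {0..1} R"
    using assms(3) unfolding R_def poly2_def by (intro continuous_intros assms(1,2)) auto
  ultimately show ?thesis
    using upper_box_dim_graph01_le_max[OF assms(1,2)] unfolding R_def \<rho>_def by blast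
qed

end
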